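(* Let $\mathcal{P}$ be a finite poset with $p$ elements. The order cone $\mathcal{C}(\mathcal{P})\subset\mathbb{R}^{\mathcal{P}}\cong\mathbb{R}^p$ is simplicial if and only if the Hasse diagram of $\mathcal{P}$ does not contain any collider.
   Context: For a finite poset $\mathcal{P}$, $\mathbb{R}^{\mathcal{P}}$ is the space of real functions on $\mathcal{P}$. The order cone $\mathcal{C}(\mathcal{P})$ is the set of all $\mathbf{f}\in\mathbb{R}^{\mathcal{P}}$ with $f_x\ge 0$ for all $x\in\mathcal{P}$ and $f_x\le f_y$ whenever $x\preceq y$. An element $y$ covers $x$, written $x\lessdot y$, if $x\prec y$ and there is no $z$ with $x\prec z\prec y$. The Hasse diagram of $\mathcal{P}$ is the directed graph on $\mathcal{P}$ with an edge $x\to y$ iff $x\lessdot y$. A collider is a set of three distinct elements $a,b,c$ with $a\lessdot c$ and $b\lessdot c$. A cone in $\mathbb{R}^p$ is simplicial if it is the conical hull of $p$ linearly independent vectors. *)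

theory Defs
  imports "HOL-Analysis.Analysis"
begin

text \<open>The finite poset P is modelled as a finite type with a partial order;
  R^P is modelled as real^'a.\<close>

definition order_cone :: "(real^'a::{finite,order}) set" where
  "order_cone = {f. (\<forall>x. 0 \<le> f $ x) \<and> (\<forall>x y. x \<le> y \<longrightarrow> f $ x \<le> f $ y)}"

definition covers :: "'a::order \<Rightarrow> 'a \<Rightarrow> bool" where
  "covers x y \<longleftrightarrow> x < y \<and> \<not> (\<exists>z. x < z \<and> z < y)"

definition has_collider :: "'a::order itself \<Rightarrow> bool" where
  "has_collider _ \<longleftrightarrow> (\<exists>a b c::'a. a \<noteq> b \<and> a \<noteq> c \<and> b \<noteq> c \<and> covers a c \<and> covers b c)"

definition conical_hull :: "'v::real_vector set \<Rightarrow> 'v set" where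
  "conical_hull V = {\<Sum>v\<in>V. c v *\<^sub>R v | c. \<forall>v\<in>V. 0 \<le> c v}"

definition simplicial :: "'v::euclidean_space set \<Rightarrow> bool" where
  "simplicial C \<longleftrightarrow> (\<exists>V. finite V \<and> card V = DIM('v) \<and> independent V \<and> C = conical_hull V)"

end

(*
  Without colliders every element has at most one lower cover, so the Hasse diagram is a
  forest.  A function f in the order cone is then the combination of the indicator vectors
  of the p principal up-sets with the coefficients f y - f (parent of y), which are
  nonnegative; these p vectors are linearly independent by triangularity, so the cone is
  simplicial.

  Conversely, the indicator vector of an up-set that is connected under comparability
  spans an extreme ray of the order cone, and every extreme ray of a cone generated by V
  is spanned by an element of V.  For a collider a, b below c, the up-set of {a, b} is such
  an up-set and is not principal, so the order cone has p + 1 pairwise non-parallel extreme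
  rays and cannot be generated by p vectors.
*)

theory Submission
  imports Defs
begin

section \<open>Finitely generated cones\<close>

definition extreme_ray :: "'v::real_vector set \<Rightarrow> 'v \<Rightarrow> bool" where
  "extreme_ray C w \<longleftrightarrow> w \<in> C \<and> w \<noteq> 0 \<and>
     (\<forall>y z. y \<in> C \<longrightarrow> z \<in> C \<longrightarrow> y + z = w \<longrightarrow> (\<exists>\<mu>. y = \<mu> *\<^sub>R w))"

lemma conical_hull_image:
  assumes "inj_on g A"
  shows "conical_hull (g ` A) = {\<Sum>x\<in>A. c x *\<^sub>R g x | c. \<forall>x\<in>A. 0 \<le> c x}"
proof (intro set_eqI iffI)
  fix f assume "f \<in> conical_hull (g ` A)"
  then obtain c where "f = (\<Sum>v\<in>g ` A. c v *\<^sub>R v)" "\<forall>v\<in>g ` A. 0 \<le> c v"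
    unfolding conical_hull_def by blast
  then show "f \<in> {\<Sum>x\<in>A. c x *\<^sub>R g x | c. \<forall>x\<in>A. 0 \<le> c x}"
    by (intro CollectI exI[of _ "c \<circ> g"] conjI) (simp_all add: sum.reindex[OF assms])
next
  fix f assume "f \<in> {\<Sum>x\<in>A. c x *\<^sub>R g x | c. \<forall>x\<in>A. 0 \<le> c x}"
  then obtain c where f: "f = (\<Sum>x\<in>A. c x *\<^sub>R g x)" and c: "\<forall>x\<in>A. 0 \<le> c x"
    by blast
  have "f = (\<Sum>v\<in>g ` A. c (inv_into A g v) *\<^sub>R v)"
    unfolding f by (simp add: sum.reindex[OF assms] inv_into_f_f[OF assms])
  moreover have "\<forall>v\<in>g ` A. 0 \<le> c (inv_into A g v)"
    using c by (simp add: inv_into_f_f[OF assms])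
  ultimately show "f \<in> conical_hull (g ` A)"
    unfolding conical_hull_def by (intro CollectI exI[of _ "\<lambda>v. c (inv_into A g v)"] conjI)
qed

lemma conical_hull_mono:
  assumes "finite V" "W \<subseteq> V"
  shows "conical_hull W \<subseteq> conical_hull V"
proof
  fix f assume "f \<in> conical_hull W"
  then obtain c where f: "f = (\<Sum>v\<in>W. c v *\<^sub>R v)" and c: "\<forall>v\<in>W. 0 \<le> c v"
    unfolding conical_hull_def by blast
  define c' where "c' v = (if v \<in> W then c v else 0)" for v
  have "(\<Sum>v\<in>V. c' v *\<^sub>R v) = (\<Sum>v\<in>W. c' v *\<^sub>R v)"
    using assms by (intro sum.mono_neutral_right) (auto simp: c'_def)
  also have "\<dots> = f"
    unfolding f c'_def by simp
  moreover have "\<forall>v\<in>V. 0 \<le> c' v"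
    using c by (simp add: c'_def)
  ultimately show "f \<in> conical_hull V"
    unfolding conical_hull_def by (intro CollectI exI[of _ c'] conjI) simp_all
qed

lemma extreme_ray_conical_hull_parallel:
  assumes "finite V" "extreme_ray (conical_hull V) w"
  shows "\<exists>v\<in>V. \<exists>l. w = l *\<^sub>R v"
proof -
  obtain c where w: "w = (\<Sum>v\<in>V. c v *\<^sub>R v)" and c: "\<forall>v\<in>V. 0 \<le> c v"
    using assms(2) unfolding extreme_ray_def conical_hull_def by blast
  have "\<exists>v\<in>V. c v *\<^sub>R v \<noteq> 0"
    using assms(2) unfolding extreme_ray_def w by (auto intro: sum.neutral)
  then obtain v0 where v0: "v0 \<in> V" "c v0 *\<^sub>R v0 \<noteq> 0"
    by blast
  define y where "y = c v0 *\<^sub>R v0"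
  define z where "z = (\<Sum>v\<in>V - {v0}. c v *\<^sub>R v)"
  have "y \<in> conical_hull {v0}"
    unfolding conical_hull_def y_def using c v0 by auto
  then have y: "y \<in> conical_hull V"
    using conical_hull_mono[OF assms(1)] v0 by blast
  have "z \<in> conical_hull (V - {v0})"
    unfolding conical_hull_def z_def using c by auto
  then have z: "z \<in> conical_hull V"
    using conical_hull_mono[OF assms(1)] by blast
  have "y + z = w"
    unfolding w y_def z_def using assms(1) v0 by (simp add: sum.remove)
  then obtain \<mu> where "y = \<mu> *\<^sub>R w"
    using assms(2) y z unfolding extreme_ray_def by blast
  moreover have "y \<noteq> 0"
    using v0(2) unfolding y_def .
  ultimately have "\<mu> \<noteq> 0"
    by auto
  with \<open>y = \<mu> *\<^sub>R w\<close> have "w = inverse \<mu> *\<^sub>R y"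
    by simp
  then have "w = (c v0 / \<mu>) *\<^sub>R v0"
    unfolding y_def by (simp add: divide_inverse_commute)
  then show ?thesis
    using v0 by blast
qed

lemma card_extreme_rays_le:
  assumes "finite V"
    and extreme: "\<And>e. e \<in> E \<Longrightarrow> extreme_ray (conical_hull V) e"
    and non_parallel: "\<And>e e' l. e \<in> E \<Longrightarrow> e' \<in> E \<Longrightarrow> e' = l *\<^sub>R e \<Longrightarrow> e' = e"
  shows "card E \<le> card V"
proof -
  obtain g where g: "\<And>e. e \<in> E \<Longrightarrow> g e \<in> V \<and> (\<exists>l. e = l *\<^sub>R g e)"
    using extreme_ray_conical_hull_parallel[OF assms(1) extreme] by metis
  have "inj_on g E"
  proof
    fix e e' assume e: "e \<in> E" and e': "e' \<in> E" and "g e = g e'"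
    obtain v where v: "g e = v" "g e' = v"
      using \<open>g e = g e'\<close> by simp
    then obtain l l' where l: "e = l *\<^sub>R v" and l': "e' = l' *\<^sub>R v"
      using g[OF e] g[OF e'] by metis
    moreover have "l \<noteq> 0"
      using extreme[OF e] l unfolding extreme_ray_def by auto
    ultimately have "e' = (l' / l) *\<^sub>R e"
      by simp
    then show "e = e'"
      using non_parallel[OF e e'] by metis
  qed
  then show ?thesis
    using card_inj_on_le[OF _ _ assms(1)] g by blast
qed


lemma simplicial_card_extreme_rays_le:
  fixes C :: "'v::euclidean_space set"
  assumes "simplicial C"
    and "\<And>e. e \<in> E \<Longrightarrow> extreme_ray C e"
    and "\<And>e e' l. e \<in> E \<Longrightarrow> e' \<in> E \<Longrightarrow> e' = l *\<^sub>R e \<Longrightarrow> e' = e"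
  shows "card E \<le> DIM('v)"
proof -
  obtain V where "finite V" "card V = DIM('v)" "C = conical_hull V"
    using assms(1) unfolding simplicial_def by blast
  then show ?thesis
    using card_extreme_rays_le[of V E] assms(2,3) by simp
qed

section \<open>Covers in a finite poset\<close>

lemma wfp_less_finite_order: "wfp ((<) :: 'a::{finite,order} \<Rightarrow> 'a \<Rightarrow> bool)"
  using strict_partial_order_wfp_on_finite_set[of UNIV, OF transp_on_less asymp_on_less finite]
  by simp

lemma exists_lower_cover_above:
  fixes x y :: "'a::{finite,order}"
  assumes "x < y"
  obtains q where "x \<le> q" "covers q y"
proof -
  obtain m where m: "x \<le> m" "m < y"
    and maximal: "\<And>z. x \<le> z \<Longrightarrow> z < y \<Longrightarrow> m \<le> z \<Longrightarrow> m = z"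
    using finite_has_maximal2[of "{w. x \<le> w \<and> w < y}" x] assms by auto
  have "\<not> (m < z \<and> z < y)" for z
  proof
    assume z: "m < z \<and> z < y"
    then have "m = z"
      using maximal m by (meson order.trans order.strict_implies_order)
    then show False
      using z by simp
  qed
  then have "covers m y"
    unfolding covers_def using m by blast
  then show thesis
    using that m by blast
qed

lemma lower_covers_le_imp_eq:
  assumes "covers a c" "covers b c" "a \<le> b"
  shows "a = b"
  using assms unfolding covers_def by (auto simp: order.order_iff_strict)

lemma lower_cover_unique:
  fixes p q y :: "'a::order"
  assumes "\<not> has_collider TYPE('a)" "covers p y" "covers q y"
  shows "p = q"
proof -
  have "p \<noteq> y" "q \<noteq> y"
    using assms(2,3) unfolding covers_def by auto
  then show ?thesis
    using assms unfolding has_collider_def by blast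
qed

lemma atMost_cases_no_collider:
  fixes y :: "'a::{finite,order}"
  assumes "\<not> has_collider TYPE('a)"
  obtains "{p. covers p y} = {}" "{..y} = {y}"
  | p where "{q. covers q y} = {p}" "p < y" "{..y} = insert y {..p}"
proof (cases "\<exists>p. covers p y")
  case False
  have "\<not> x < y" for x
    using exists_lower_cover_above[of x y] False by metis
  then have "{..y} = {y}"
    by (auto simp: order.order_iff_strict)
  then show thesis
    using False that(1) by blast
next
  case True
  then obtain p where p: "covers p y"
    by blast
  have "x \<le> p" if "x < y" for x
    using exists_lower_cover_above[OF that] lower_cover_unique[OF assms _ p] by metis
  then have "{..y} = insert y {..p}"
    using p unfolding covers_def by (auto simp: order.order_iff_strict)
  moreover have "{q. covers q y} = {p}"
    using lower_cover_unique[OF assms _ p] p by blast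
  ultimately show thesis
    using that(2) p unfolding covers_def by blast
qed


section \<open>The order cone\<close>

definition indicator_vector :: "'a::finite set \<Rightarrow> real^'a" where
  "indicator_vector U = (\<chi> u. indicator U u)"

lemma indicator_vector_nth [simp]: "indicator_vector U $ u = indicator U u"
  by (simp add: indicator_vector_def)

lemma inj_indicator_vector: "inj indicator_vector"
proof (rule injI)
  fix U V :: "'a set"
  assume "indicator_vector U = indicator_vector V"
  then have "indicator U u = (indicator V u :: real)" for u
    by (metis indicator_vector_nth)
  then show "U = V"
    by (metis indicator_eq_1_iff subsetI subset_antisym)
qed

lemma indicator_vector_eq_scaleR_imp_eq:
  assumes "indicator_vector U = l *\<^sub>R indicator_vector V" "U \<noteq> {}"
  shows "U = V"
proof -
  obtain u where "u \<in> U"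
    using assms(2) by blast
  then have "l * indicator V u = 1"
    using arg_cong[OF assms(1), of "\<lambda>f. f $ u"] by simp
  then have "l = 1"
    by (cases "u \<in> V") simp_all
  then have "indicator_vector U = indicator_vector V"
    using assms(1) by simp
  then show ?thesis
    by (rule injD[OF inj_indicator_vector])
qed

lemma sum_indicator_vector_atLeast_nth:
  fixes c :: "'a::{finite,order} \<Rightarrow> real"
  shows "(\<Sum>x\<in>UNIV. c x *\<^sub>R indicator_vector {x..}) $ y = sum c {..y}"
proof -
  have "(\<Sum>x\<in>UNIV. c x *\<^sub>R indicator_vector {x..}) $ y = (\<Sum>x\<in>UNIV. if x \<le> y then c x else 0)"
    unfolding sum_component by (intro sum.cong) (auto simp: indicator_def)
  also have "\<dots> = sum c {..y}"
    by (simp add: sum.inter_filter[symmetric] atMost_def)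
  finally show ?thesis .
qed

lemma inj_indicator_vector_atLeast: "inj (\<lambda>x::'a::{finite,order}. indicator_vector {x..})"
proof -
  have "inj (atLeast :: 'a \<Rightarrow> 'a set)"
    by (simp add: inj_def)
  then show ?thesis
    using inj_compose[OF inj_indicator_vector] by (simp add: comp_def)
qed

lemma independent_indicator_vector_atLeast:
  "independent (range (\<lambda>x::'a::{finite,order}. indicator_vector {x..}))"
proof (rule independent_if_scalars_zero)
  fix f :: "(real, 'a) vec \<Rightarrow> real" and v
  assume zero: "(\<Sum>w\<in>range (\<lambda>x. indicator_vector {x..}). f w *\<^sub>R w) = 0"
    and v: "v \<in> range (\<lambda>x::'a. indicator_vector {x..})"
  define c where "c x = f (indicator_vector {x..})" for x :: 'a
  have "(\<Sum>x\<in>UNIV. c x *\<^sub>R indicator_vector {x..}) = 0"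
    using zero by (simp add: c_def sum.reindex[OF inj_indicator_vector_atLeast])
  then have sum_c: "sum c {..y} = 0" for y
    using sum_indicator_vector_atLeast_nth[of c y] by simp
  have "c y = 0" for y
  proof (induction y rule: wfp_induct_rule[OF wfp_less_finite_order])
    case (1 y)
    have "sum c {..<y} = 0"
      using 1 by (simp add: sum.neutral)
    moreover have "{..y} = insert y {..<y}"
      by (auto simp: order.order_iff_strict)
    ultimately have "sum c {..y} = c y"
      by simp
    then show ?case
      using sum_c by simp
  qed
  then show "f v = 0"
    using v by (auto simp: c_def)
qed simp

lemma conical_hull_atLeast_subset_order_cone:
  "conical_hull (range (\<lambda>x::'a::{finite,order}. indicator_vector {x..})) \<subseteq> order_cone"
proof
  fix f :: "(real, 'a) vec"
  assume "f \<in> conical_hull (range (\<lambda>x. indicator_vector {x..}))"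
  then obtain c where f: "f = (\<Sum>x\<in>UNIV. c x *\<^sub>R indicator_vector {x..})" and c: "\<forall>x. 0 \<le> c x"
    unfolding conical_hull_image[OF inj_indicator_vector_atLeast] by blast
  have "f $ y = sum c {..y}" for y
    unfolding f by (rule sum_indicator_vector_atLeast_nth)
  then show "f \<in> order_cone"
    unfolding order_cone_def using c by (auto intro: sum_nonneg sum_mono2)
qed

text \<open>The sum over the lower covers of y has at most one term, the parent of y in the
  Hasse forest.\<close>

lemma order_cone_subset_conical_hull_atLeast:
  assumes "\<not> has_collider TYPE('a::{finite,order})"
  shows "order_cone \<subseteq> conical_hull (range (\<lambda>x::'a. indicator_vector {x..}))"
proof
  fix f :: "(real, 'a) vec"
  assume f: "f \<in> order_cone"
  define c where "c y = f $ y - (\<Sum>p\<in>{p. covers p y}. f $ p)" for y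
  have "0 \<le> c y" for y
    using f by (cases rule: atMost_cases_no_collider[OF assms, of y])
      (simp_all add: c_def order_cone_def)
  moreover have "sum c {..y} = f $ y" for y
  proof (induction y rule: wfp_induct_rule[OF wfp_less_finite_order])
    case (1 y)
    then have IH: "\<And>x. x < y \<Longrightarrow> sum c {..x} = f $ x" .
    show ?case
    proof (cases rule: atMost_cases_no_collider[OF assms, of y])
      case 1
      then show ?thesis
        unfolding c_def by simp
    next
      case (2 p)
      then show ?thesis
        using IH[of p] unfolding c_def by simp
    qed
  qed
  then have "f = (\<Sum>x\<in>UNIV. c x *\<^sub>R indicator_vector {x..})"
    unfolding vec_eq_iff sum_indicator_vector_atLeast_nth by simp
  ultimately show "f \<in> conical_hull (range (\<lambda>x. indicator_vector {x..}))"
    unfolding conical_hull_image[OF inj_indicator_vector_atLeast] by blast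
qed

lemma no_collider_imp_simplicial:
  assumes "\<not> has_collider TYPE('a)"
  shows "simplicial (order_cone :: (real^'a::{finite,order}) set)"
  unfolding simplicial_def
proof (intro exI conjI)
  show "order_cone = conical_hull (range (\<lambda>x::'a. indicator_vector {x..}))"
    using order_cone_subset_conical_hull_atLeast[OF assms] conical_hull_atLeast_subset_order_cone
    by (rule antisym)
  show "card (range (\<lambda>x::'a. indicator_vector {x..})) = DIM((real, 'a) vec)"
    by (simp add: card_image[OF inj_indicator_vector_atLeast])
qed (simp_all add: independent_indicator_vector_atLeast)

lemma extreme_ray_order_cone_indicator_vector:
  fixes U :: "'a::{finite,order} set"
  assumes up: "\<And>u v. u \<in> U \<Longrightarrow> u \<le> v \<Longrightarrow> v \<in> U"
    and "r \<in> U"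
    and linked: "\<And>u. u \<in> U \<Longrightarrow> \<exists>s\<in>U. s \<le> r \<and> s \<le> u"
  shows "extreme_ray order_cone (indicator_vector U)"
  unfolding extreme_ray_def
proof (intro conjI allI impI)
  show "indicator_vector U \<in> order_cone"
    using up unfolding order_cone_def by (auto simp: indicator_def)
  have "indicator_vector U $ r = 1"
    using \<open>r \<in> U\<close> by simp
  then show "indicator_vector U \<noteq> 0"
    by (metis zero_index zero_neq_one)
  fix y z
  assume y: "y \<in> order_cone" and z: "z \<in> order_cone" and yz: "y + z = indicator_vector U"
  have split: "y $ u + z $ u = indicator U u" for u
    using arg_cong[OF yz, of "\<lambda>f. f $ u"] by simp
  have nonneg: "0 \<le> y $ u" "0 \<le> z $ u" for u
    using y z unfolding order_cone_def by auto
  have mono: "y $ u \<le> y $ v" "z $ u \<le> z $ v" if "u \<le> v" for u v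
    using y z that unfolding order_cone_def by auto
  have outside: "y $ u = 0" if "u \<notin> U" for u
    using split[of u] nonneg[of u] that by simp
  have along: "y $ u = y $ v" if "u \<in> U" "u \<le> v" for u v
    using split[of u] split[of v] mono[OF \<open>u \<le> v\<close>] up[OF that] that by simp
  have inside: "y $ u = y $ r" if "u \<in> U" for u
    using linked[OF that] along \<open>r \<in> U\<close> that by metis
  have "y = y $ r *\<^sub>R indicator_vector U"
    by (simp add: vec_eq_iff indicator_def outside inside)
  then show "\<exists>\<mu>. y = \<mu> *\<^sub>R indicator_vector U"
    by blast
qed

lemma extreme_ray_order_cone_atLeast:
  "extreme_ray order_cone (indicator_vector {x..} :: real^'a::{finite,order})"
  by (rule extreme_ray_order_cone_indicator_vector[where r = x]) (auto intro: order.trans)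

lemma extreme_ray_order_cone_atLeast_union:
  fixes a b c :: "'a::{finite,order}"
  assumes "a \<le> c" "b \<le> c"
  shows "extreme_ray order_cone (indicator_vector ({a..} \<union> {b..}))"
  by (rule extreme_ray_order_cone_indicator_vector[where r = c])
    (use assms in \<open>auto intro: order.trans\<close>)

lemma collider_imp_not_simplicial:
  assumes "has_collider TYPE('a)"
  shows "\<not> simplicial (order_cone :: (real^'a::{finite,order}) set)"
proof
  assume simplicial: "simplicial (order_cone :: (real, 'a) vec set)"
  obtain a b c :: 'a where "a \<noteq> b" "covers a c" "covers b c"
    using assms unfolding has_collider_def by blast
  then have "a \<le> c" "b \<le> c" "\<not> a \<le> b" "\<not> b \<le> a"
    using lower_covers_le_imp_eq unfolding covers_def by (auto intro: less_imp_le)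
  define W where "W = {a..} \<union> {b..}"
  define E where "E = indicator_vector ` insert W (range atLeast)"
  have "W \<notin> range atLeast"
    using \<open>\<not> a \<le> b\<close> \<open>\<not> b \<le> a\<close> unfolding W_def
    by (auto simp: set_eq_iff) (metis order.trans order.refl)
  have "card E = card (insert W (range atLeast))"
    unfolding E_def by (rule card_image[OF inj_on_subset[OF inj_indicator_vector subset_UNIV]])
  also have "\<dots> = Suc (card (range (atLeast :: 'a \<Rightarrow> 'a set)))"
    using \<open>W \<notin> range atLeast\<close> by simp
  also have "\<dots> = CARD('a) + 1"
    by (simp add: card_image inj_def)
  finally have "card E = CARD('a) + 1" .
  moreover have "card E \<le> DIM((real, 'a) vec)"
  proof (rule simplicial_card_extreme_rays_le[OF simplicial])
    show "extreme_ray order_cone e" if "e \<in> E" for e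
      using that extreme_ray_order_cone_atLeast
        extreme_ray_order_cone_atLeast_union[OF \<open>a \<le> c\<close> \<open>b \<le> c\<close>]
      unfolding E_def W_def by blast
    show "e' = e" if "e \<in> E" "e' \<in> E" "e' = l *\<^sub>R e" for e e' l
    proof -
      obtain U U' where "e = indicator_vector U" "e' = indicator_vector U'" "U' \<noteq> {}"
        using \<open>e \<in> E\<close> \<open>e' \<in> E\<close> unfolding E_def W_def by auto
      then show ?thesis
        using indicator_vector_eq_scaleR_imp_eq \<open>e' = l *\<^sub>R e\<close> by metis
    qed
  qed
  ultimately show False
    by simp
qed

theorem theorem2:
  shows "simplicial (order_cone :: (real^'a::{finite,order}) set) \<longleftrightarrow> \<not> has_collider TYPE('a)"
  using collider_imp_not_simplicial no_collider_imp_simplicial by blast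

end
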